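(* Let $1<p<\infty$. Then for every complex-valued $u\in C_0^\infty(\mathbb{R}^N\setminus\{0\})$, $$\int_{\mathbb{R}^N}\left|\nabla u\cdot\frac{x}{|x|}\right|^p dx=\left(\frac{N-p}{p}\right)^p\int_{\mathbb{R}^N}\frac{|u|^p}{|x|^p}dx+\int_{\mathbb{R}^N}C_p\left(\nabla u\cdot\frac{x}{|x|},\;|x|^{-\frac{N-p}{p}}\nabla\!\left(\frac{u}{|x|^{-\frac{N-p}{p}}}\right)\cdot\frac{x}{|x|}\right)dx.$$
   Context: $\nabla$ is the Euclidean gradient, $a\cdot b=\sum_ia_ib_i$, $|\cdot|$ the Euclidean norm. For $1<p<\infty$ and $\xi,\eta\in\mathbb{C}$, $C_p(\xi,\eta):=|\xi|^p-|\xi-\eta|^p-p|\xi-\eta|^{p-2}\mathrm{Re}\big((\xi-\eta)\overline{\eta}\big)\ (\ge0)$. *)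

theory Defs
  imports "HOL-Analysis.Analysis"
begin

text \<open>C-infinity functions on the whole space: differentiable everywhere, and every
  directional derivative is again C-infinity (coinductively, i.e. derivatives of all orders exist).\<close>
coinductive smooth_fun :: "('a::euclidean_space \<Rightarrow> 'b::real_normed_vector) \<Rightarrow> bool" where
  "(\<And>x. f differentiable (at x)) \<Longrightarrow>
   (\<And>v. smooth_fun (\<lambda>x. frechet_derivative f (at x) v)) \<Longrightarrow> smooth_fun f"

definition Cc_inf_punctured :: "('a::euclidean_space \<Rightarrow> complex) \<Rightarrow> bool" where
  "Cc_inf_punctured u \<longleftrightarrow> smooth_fun u \<and> compact (closure {x. u x \<noteq> 0})
      \<and> 0 \<notin> closure {x. u x \<noteq> 0}"

definition Cp :: "real \<Rightarrow> complex \<Rightarrow> complex \<Rightarrow> real" where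
  "Cp p \<xi> \<eta> = norm \<xi> powr p - norm (\<xi> - \<eta>) powr p
      - p * norm (\<xi> - \<eta>) powr (p - 2) * Re ((\<xi> - \<eta>) * cnj \<eta>)"

end

theory Submission
  imports Defs
begin

(*
  Put xi = grad u . x/|x| and a = (N - p)/p. For x <> 0 one has
  |x|^(-a) d/dr (|x|^a u) = xi + (a/|x|) u, and expanding C_p gives the pointwise identity
    C_p = |xi|^p + (p - 1) |a|^p |u|^p/|x|^p + a |a|^(p-2) (x . grad |u|^p)/|x|^p.
  The last term is integrated by a dilation argument instead of polar coordinates: for
  v = |u|^p the map t |-> int v(t x)/|x|^p dx equals t^(p-N) int v/|x|^p, and
  differentiating under the integral sign at t = 1 gives
    int (x . grad v)/|x|^p = (p - N) int v/|x|^p.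
  As p - N = -p a, the coefficients of int |u|^p/|x|^p combine to (p - 1)|a|^p - p|a|^p = -|a|^p.
*)

section \<open>Differentiating the p-th power of the norm\<close>

definition norm_powr_grad :: "real \<Rightarrow> 'a::real_normed_vector \<Rightarrow> 'a" where
  "norm_powr_grad p z = norm z powr (p - 2) *\<^sub>R z"

lemma norm_norm_powr_grad: "norm (norm_powr_grad p z) = norm z powr (p - 1)"
  by (cases "z = 0") (auto simp: norm_powr_grad_def powr_diff power2_eq_square)

lemma continuous_on_norm_powr_grad:
  assumes "1 < p"
  shows "continuous_on UNIV (norm_powr_grad p :: 'a::real_normed_vector \<Rightarrow> 'a)"
proof -
  have "isCont (norm_powr_grad p) z" for z :: 'a
  proof (cases "z = 0")
    case False
    then show ?thesis
      unfolding norm_powr_grad_def by (intro continuous_intros) auto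
  next
    case True
    have "((\<lambda>y::'a. norm y powr (p - 1)) \<longlongrightarrow> norm (0::'a) powr (p - 1)) (at 0)"
      using assms by (intro tendsto_intros tendsto_powr2) auto
    then have "((\<lambda>y. norm (norm_powr_grad p y)) \<longlongrightarrow> 0) (at (0::'a))"
      by (simp add: norm_norm_powr_grad)
    then have "(norm_powr_grad p \<longlongrightarrow> 0) (at (0::'a))"
      by (rule tendsto_norm_zero_cancel)
    then show ?thesis
      using True by (simp add: isCont_def norm_powr_grad_def)
  qed
  then show ?thesis
    by (simp add: continuous_on_eq_continuous_at)
qed

lemma has_derivative_norm_powr_nonzero:
  fixes z :: "'a::real_inner"
  assumes "z \<noteq> 0"
  shows "((\<lambda>z. norm z powr p) has_derivative (\<lambda>h. p * (norm_powr_grad p z \<bullet> h))) (at z)"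
proof -
  have "(norm has_derivative (\<lambda>h. sgn z \<bullet> h)) (at z)"
    using has_derivative_norm[OF assms] by (simp add: inner_commute[of _ "sgn z"])
  then have "((\<lambda>z. norm z powr p) has_derivative
      (\<lambda>h. norm z powr p * (0 * ln (norm z) + (sgn z \<bullet> h) * p / norm z))) (at z)"
    using assms by (intro has_derivative_powr) (auto intro!: derivative_eq_intros)
  moreover have "norm z powr p * (0 * ln (norm z) + (sgn z \<bullet> h) * p / norm z)
      = p * (norm_powr_grad p z \<bullet> h)" for h
    using assms by (simp add: norm_powr_grad_def sgn_div_norm powr_diff power2_eq_square field_simps)
  ultimately show ?thesis
    by simp
qed

lemma has_derivative_norm_powr:
  fixes z :: "'a::real_inner"
  assumes "1 < p"
  shows "((\<lambda>z. norm z powr p) has_derivative (\<lambda>h. p * (norm_powr_grad p z \<bullet> h))) (at z)"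
proof (cases "z = 0")
  case False
  then show ?thesis
    by (rule has_derivative_norm_powr_nonzero)
next
  case True
  have "((\<lambda>y::'a. norm y powr (p - 1)) \<longlongrightarrow> norm (0::'a) powr (p - 1)) (at 0)"
    using assms by (intro tendsto_intros tendsto_powr2) auto
  moreover have "norm y powr (p - 1) = norm y powr p / norm y" for y :: 'a
    by (cases "y = 0") (simp_all add: powr_diff)
  ultimately have "((\<lambda>y::'a. norm y powr p / norm y) \<longlongrightarrow> 0) (at 0)"
    by simp
  then show ?thesis
    using True by (simp add: has_derivative_iff_norm norm_powr_grad_def bounded_linear_const_mult
        bounded_linear_inner_right)
qed

section \<open>Pointwise expansion of C_p\<close>

lemma powr_mult_square: "0 \<le> (x::real) \<Longrightarrow> x powr (p - 2) * x\<^sup>2 = x powr p"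
  by (cases "x = 0") (auto simp: powr_diff power2_eq_square)

lemma Cp_add_of_real_mult:
  fixes \<zeta> w :: complex
  shows "Cp p \<zeta> (\<zeta> + complex_of_real b * w) = norm \<zeta> powr p + (p - 1) * \<bar>b\<bar> powr p * norm w powr p
      + p * b * \<bar>b\<bar> powr (p - 2) * (norm_powr_grad p w \<bullet> \<zeta>)"
proof -
  have re: "Re ((\<zeta> - (\<zeta> + complex_of_real b * w)) * cnj (\<zeta> + complex_of_real b * w))
      = - b * (w \<bullet> \<zeta>) - b\<^sup>2 * (norm w)\<^sup>2"
    unfolding cmod_power2 by (simp add: inner_complex_def algebra_simps power2_eq_square)
  have "\<bar>b\<bar> powr (p - 2) * b\<^sup>2 = \<bar>b\<bar> powr p" "norm w powr (p - 2) * (norm w)\<^sup>2 = norm w powr p"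
    using powr_mult_square[of "\<bar>b\<bar>" p] powr_mult_square[of "norm w" p] by simp_all
  then show ?thesis
    unfolding Cp_def re
    by (simp add: norm_mult powr_mult norm_powr_grad_def algebra_simps power2_eq_square)
qed

lemma Cp_weighted_radial_derivative:
  fixes u :: "'a::real_inner \<Rightarrow> complex"
  assumes u: "(u has_derivative u') (at x)"
  shows "Cp p (u' (x /\<^sub>R norm x)) (complex_of_real (norm x powr - a)
        * frechet_derivative (\<lambda>y. complex_of_real (norm y powr a) * u y) (at x) (x /\<^sub>R norm x))
    = norm (u' (x /\<^sub>R norm x)) powr p + (p - 1) * \<bar>a\<bar> powr p * (norm (u x) powr p / norm x powr p)
      + a * \<bar>a\<bar> powr (p - 2) * (p * (norm_powr_grad p (u x) \<bullet> u' x) / norm x powr p)"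
proof (cases "x = 0")
  case True
  \<comment> \<open>both sides vanish at the origin, as \<open>0 powr _ = 0\<close> and \<open>_ / 0 = 0\<close>\<close>
  then show ?thesis
    using linear_0[OF has_derivative_linear[OF u]] by (simp add: Cp_def)
next
  case False
  define r where "r = norm x"
  have "r > 0"
    using False by (simp add: r_def)
  have lin: "linear u'"
    using has_derivative_linear[OF u] .
  have "((\<lambda>y. complex_of_real (norm y powr a) * u y) has_derivative
      (\<lambda>h. complex_of_real (norm x powr a) * u' h
        + complex_of_real (a * (norm_powr_grad a x \<bullet> h)) * u x)) (at x)"
    using has_derivative_mult[OF has_derivative_of_real[OF has_derivative_norm_powr_nonzero[OF False]]
        u]
    by simp
  moreover have "norm_powr_grad a x \<bullet> (x /\<^sub>R r) = r powr a / r"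
    using \<open>r > 0\<close>
    by (simp add: norm_powr_grad_def r_def dot_square_norm powr_diff power2_eq_square field_simps)
  ultimately have "frechet_derivative (\<lambda>y. complex_of_real (norm y powr a) * u y) (at x) (x /\<^sub>R r)
      = complex_of_real (r powr a) * u' (x /\<^sub>R r) + complex_of_real (a * (r powr a / r)) * u x"
    by (simp add: frechet_derivative_at[symmetric] r_def)
  moreover have "r powr - a * r powr a = 1"
    using \<open>r > 0\<close> by (simp add: powr_minus)
  ultimately have weighted: "complex_of_real (r powr - a)
      * frechet_derivative (\<lambda>y. complex_of_real (norm y powr a) * u y) (at x) (x /\<^sub>R r)
      = u' (x /\<^sub>R r) + complex_of_real (a / r) * u x"
    by (simp add: algebra_simps flip: of_real_mult mult.assoc)
  have "u' x = r *\<^sub>R u' (x /\<^sub>R r)"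
    using \<open>r > 0\<close> linear_scale[OF lin, of r "x /\<^sub>R r"] by simp
  moreover have "r powr p = r powr (p - 2) * r\<^sup>2"
    using powr_mult_square[of r p] \<open>r > 0\<close> by simp
  ultimately show ?thesis
    unfolding r_def[symmetric] weighted Cp_add_of_real_mult
    using \<open>r > 0\<close> by (simp add: powr_divide field_simps power2_eq_square)
qed

section \<open>Radial derivatives integrated by dilation\<close>

lemma has_derivative_locally_zero:
  assumes "open T" "x \<in> T" "\<And>y. y \<in> T \<Longrightarrow> f y = 0"
  shows "(f has_derivative (\<lambda>h. 0)) (at x)"
proof -
  have "(f has_derivative (\<lambda>h. 0)) (at x within UNIV)"
    by (rule has_derivative_transform_within_open[OF has_derivative_const assms(1,2)])
       (use assms(3) in auto)
  then show ?thesis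
    by simp
qed

lemma continuous_on_divide_norm_powr:
  fixes f :: "'c::topological_space \<Rightarrow> real" and \<phi> :: "'c \<Rightarrow> 'a::real_normed_vector"
  assumes f: "continuous_on S f" and \<phi>: "continuous_on S \<phi>" and "\<delta> > 0"
    and vanish: "\<And>z. z \<in> S \<Longrightarrow> norm (\<phi> z) < \<delta> \<Longrightarrow> f z = 0"
  shows "continuous_on S (\<lambda>z. f z / norm (\<phi> z) powr s)"
proof -
  have "continuous_on S (\<lambda>z. f z / max (norm (\<phi> z)) \<delta> powr s)"
    using \<open>\<delta> > 0\<close> by (intro continuous_intros f \<phi>) auto
  moreover have "f z / max (norm (\<phi> z)) \<delta> powr s = f z / norm (\<phi> z) powr s" if "z \<in> S" for z
    using vanish[OF that] by (cases "norm (\<phi> z) < \<delta>") auto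
  ultimately show ?thesis
    using continuous_on_cong by force
qed

lemma integrable_continuous_compact_support:
  fixes f :: "'a::euclidean_space \<Rightarrow> real"
  assumes f: "continuous_on UNIV f" and "compact K" and vanish: "\<And>x. x \<notin> K \<Longrightarrow> f x = 0"
  shows "integrable lborel f" "(\<integral>x. f x \<partial>lborel) = integral K f"
proof -
  have f_restrict: "f = (\<lambda>x. if x \<in> K then f x else 0)"
    using vanish by auto
  have "(\<lambda>x. indicator K x *\<^sub>R f x) = f"
    using vanish by (auto simp: indicator_def of_bool_def)
  moreover have "integrable lborel (\<lambda>x. indicator K x *\<^sub>R f x)"
    using \<open>compact K\<close> continuous_on_subset[OF f] by (intro borel_integrable_compact) auto
  ultimately show int: "integrable lborel f"
    by simp
  have "integral UNIV f = integral K f"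
    by (subst f_restrict) (rule integral_restrict_UNIV)
  then show "(\<integral>x. f x \<partial>lborel) = integral K f"
    using integral_lborel[OF int] by simp
qed

lemma leibniz_rule_lborel:
  fixes f f' :: "real \<Rightarrow> 'a::euclidean_space \<Rightarrow> real"
  assumes "convex U" "t\<^sub>0 \<in> interior U"
    and deriv: "\<And>t x. t \<in> U \<Longrightarrow> ((\<lambda>t. f t x) has_field_derivative f' t x) (at t within U)"
    and cont: "continuous_on (U \<times> UNIV) (\<lambda>(t, x). f t x)"
    and cont': "continuous_on (U \<times> UNIV) (\<lambda>(t, x). f' t x)"
    and support: "\<And>t x. t \<in> U \<Longrightarrow> x \<notin> cbox a b \<Longrightarrow> f t x = 0 \<and> f' t x = 0"
  shows "integrable lborel (f' t\<^sub>0)"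
    and "((\<lambda>t. \<integral>x. f t x \<partial>lborel) has_field_derivative (\<integral>x. f' t\<^sub>0 x \<partial>lborel)) (at t\<^sub>0)"
proof -
  have "t\<^sub>0 \<in> U"
    using assms(2) interior_subset by blast
  have slice: "continuous_on UNIV (g t)" if "continuous_on (U \<times> UNIV) (\<lambda>(t, x). g t x)" "t \<in> U"
    for g :: "real \<Rightarrow> 'a \<Rightarrow> real" and t
    using continuous_on_compose2[OF that(1), of UNIV "Pair t"] that(2) by (auto simp: continuous_intros)
  have lborel_integral: "(\<integral>x. f t x \<partial>lborel) = integral (cbox a b) (f t)" if "t \<in> U" for t
    using support[OF that] by (intro integrable_continuous_compact_support(2) slice[OF cont that]) auto
  have "f' t\<^sub>0 x = 0" if "x \<notin> cbox a b" for x
    using support[OF \<open>t\<^sub>0 \<in> U\<close> that] by blast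
  note support' = integrable_continuous_compact_support[OF slice[OF cont' \<open>t\<^sub>0 \<in> U\<close>] compact_cbox this]
  show "integrable lborel (f' t\<^sub>0)"
    using support'(1) by simp
  have "((\<lambda>t. integral (cbox a b) (f t)) has_field_derivative integral (cbox a b) (f' t\<^sub>0))
      (at t\<^sub>0 within U)"
  proof (rule leibniz_rule_field_derivative)
    show "f t integrable_on cbox a b" if "t \<in> U" for t
      using slice[OF cont that] by (simp add: integrable_continuous continuous_on_subset)
    show "continuous_on (U \<times> cbox a b) (\<lambda>(t, x). f' t x)"
      by (rule continuous_on_subset[OF cont']) auto
  qed (use deriv assms(1) \<open>t\<^sub>0 \<in> U\<close> in auto)
  then have "((\<lambda>t. integral (cbox a b) (f t)) has_field_derivative (\<integral>x. f' t\<^sub>0 x \<partial>lborel)) (at t\<^sub>0)"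
    using support'(2) at_within_interior[OF assms(2)] by simp
  then show "((\<lambda>t. \<integral>x. f t x \<partial>lborel) has_field_derivative (\<integral>x. f' t\<^sub>0 x \<partial>lborel)) (at t\<^sub>0)"
    by (rule has_field_derivative_transform_within_open[OF _ open_interior assms(2)])
       (simp add: lborel_integral interior_subset[THEN subsetD])
qed

lemma lborel_integral_scaleR:
  fixes f :: "'a::euclidean_space \<Rightarrow> real"
  assumes "c > 0" and [measurable]: "f \<in> borel_measurable borel"
  shows "(\<integral>x. f (c *\<^sub>R x) \<partial>lborel) = (\<integral>x. f x \<partial>lborel) / c ^ DIM('a)"
proof -
  have "(\<integral>x. f x \<partial>lborel)
      = (\<integral>x. f x \<partial>density (distr lborel borel (\<lambda>x. 0 + c *\<^sub>R x)) (\<lambda>_. \<bar>c\<bar> ^ DIM('a)))"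
    using lborel_affine[of c "0::'a"] \<open>c > 0\<close> by simp
  also have "\<dots> = c ^ DIM('a) * (\<integral>x. f (c *\<^sub>R x) \<partial>lborel)"
    using \<open>c > 0\<close> by (simp add: integral_density integral_distr)
  finally show ?thesis
    using \<open>c > 0\<close> by simp
qed

lemma lborel_integral_dilation_norm_powr:
  fixes v :: "'a::euclidean_space \<Rightarrow> real"
  assumes "t > 0" and [measurable]: "v \<in> borel_measurable borel"
  shows "(\<integral>x. v (t *\<^sub>R x) / norm x powr s \<partial>lborel)
       = t powr (s - DIM('a)) * (\<integral>x. v x / norm x powr s \<partial>lborel)"
proof -
  \<comment> \<open>this also holds at \<open>x = 0\<close>, where both sides are \<open>_ / 0 = 0\<close>\<close>
  have "(\<lambda>x. v (t *\<^sub>R x) / norm x powr s)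
      = (\<lambda>x. t powr s * (v (t *\<^sub>R x) / norm (t *\<^sub>R x) powr s))"
    using \<open>t > 0\<close> by (intro ext) (simp add: powr_mult)
  then have "(\<integral>x. v (t *\<^sub>R x) / norm x powr s \<partial>lborel)
      = t powr s * (\<integral>x. v (t *\<^sub>R x) / norm (t *\<^sub>R x) powr s \<partial>lborel)"
    by (simp only: integral_mult_right_zero)
  also have "\<dots> = t powr s * ((\<integral>x. v x / norm x powr s \<partial>lborel) / t ^ DIM('a))"
    using \<open>t > 0\<close> by (subst lborel_integral_scaleR[where f = "\<lambda>x. v x / norm x powr s"]) auto
  finally show ?thesis
    using \<open>t > 0\<close> by (simp add: powr_diff powr_realpow)
qed

lemma compact_dilation_preimage_annulus:
  fixes S :: "'a::euclidean_space set"
  assumes "compact S" "0 \<notin> S"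
  obtains \<delta> a where "\<delta> > 0"
    "\<And>t x. t \<in> {1/2..2} \<Longrightarrow> t *\<^sub>R x \<in> S \<Longrightarrow> \<delta> \<le> norm x \<and> x \<in> cbox (-a) a"
proof -
  obtain e where "e > 0" and e: "\<And>y. y \<in> S \<Longrightarrow> e \<le> norm y"
    using separate_point_closed[OF compact_imp_closed[OF assms(1)] assms(2)] by (auto simp: dist_norm)
  obtain R where R: "\<And>y. y \<in> S \<Longrightarrow> norm y \<le> R"
    using compact_imp_bounded[OF assms(1)] bounded_iff by blast
  obtain a where a: "cball (0::'a) (2 * R) \<subseteq> cbox (-a) a"
    using bounded_subset_cbox_symmetric[of "cball (0::'a) (2 * R)"] by blast
  have "e / 2 \<le> norm x \<and> x \<in> cbox (-a) a" if "t \<in> {1/2..2}" "t *\<^sub>R x \<in> S" for t x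
  proof -
    have tx: "norm (t *\<^sub>R x) = t * norm x"
      using that(1) by simp
    have "e \<le> t * norm x" "t * norm x \<le> R"
      using e[OF that(2)] R[OF that(2)] by (simp_all only: tx)
    moreover have "t * norm x \<le> 2 * norm x" "1 * norm x \<le> (2 * t) * norm x"
      using that(1) by (intro mult_right_mono; simp)+
    ultimately have "e / 2 \<le> norm x" "norm x \<le> 2 * R"
      by linarith+
    then show ?thesis
      using a by auto
  qed
  with \<open>e > 0\<close> show ?thesis
    by (intro that[of "e / 2"]) auto
qed

lemma has_field_derivative_dilation:
  fixes v :: "'a::real_normed_vector \<Rightarrow> real"
  assumes "(v has_derivative v') (at (t *\<^sub>R x))"
  shows "((\<lambda>t. v (t *\<^sub>R x)) has_field_derivative v' x) (at t within U)"
proof -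
  have "(\<lambda>r. v' (r *\<^sub>R x)) = (*) (v' x)"
    using linear_scale[OF has_derivative_linear[OF assms]] by (auto simp: fun_eq_iff)
  moreover have "((\<lambda>t. v (t *\<^sub>R x)) has_derivative (\<lambda>r. v' (r *\<^sub>R x))) (at t within U)"
    using has_derivative_compose[OF has_derivative_scaleR_left[OF has_derivative_ident] assms]
    by simp
  ultimately show ?thesis
    by (simp add: has_field_derivative_def)
qed

lemma has_field_derivative_lborel_integral_dilation:
  fixes v :: "'a::euclidean_space \<Rightarrow> real"
  assumes v: "\<And>y. (v has_derivative v' y) (at y)"
    and v'_cont: "continuous_on UNIV (\<lambda>z. v' (fst z) (snd z))"
    and S: "compact S" "0 \<notin> S" and vanish: "\<And>y. y \<notin> S \<Longrightarrow> v y = 0"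
  shows "integrable lborel (\<lambda>x. v' x x / norm x powr s)"
    and "((\<lambda>t. \<integral>x. v (t *\<^sub>R x) / norm x powr s \<partial>lborel) has_field_derivative
          (\<integral>x. v' x x / norm x powr s \<partial>lborel)) (at 1)"
proof -
  define U where "U = {1/2..2::real}"
  obtain \<delta> a where "\<delta> > 0"
    and annulus: "\<And>t x. t \<in> U \<Longrightarrow> t *\<^sub>R x \<in> S \<Longrightarrow> \<delta> \<le> norm x \<and> x \<in> cbox (-a) a"
    using compact_dilation_preimage_annulus[OF S] unfolding U_def by metis
  have off_S: "t *\<^sub>R x \<notin> S" if "t \<in> U" "norm x < \<delta>" for t x
    using annulus[OF that(1)] that(2) by force
  have v'_vanish: "v' y = (\<lambda>h. 0)" if "y \<notin> S" for y
    using has_derivative_unique[OF v has_derivative_locally_zero[of "- S"]] that vanish S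
    by (auto simp: compact_imp_closed open_Compl)
  have "continuous_on UNIV v"
    using v by (meson continuous_at_imp_continuous_on has_derivative_continuous)
  then have "continuous_on (U \<times> UNIV) (\<lambda>z. v (fst z *\<^sub>R snd z))"
    by (rule continuous_on_compose2) (auto intro!: continuous_intros)
  then have cont: "continuous_on (U \<times> UNIV) (\<lambda>(t, x). v (t *\<^sub>R x) / norm x powr s)"
    unfolding case_prod_beta using off_S vanish \<open>\<delta> > 0\<close>
    by (intro continuous_on_divide_norm_powr continuous_intros) (auto simp: not_le)
  have "continuous_on (U \<times> UNIV) (\<lambda>z. v' (fst z *\<^sub>R snd z) (snd z))"
    using continuous_on_compose2[OF v'_cont, of "U \<times> UNIV" "\<lambda>z. (fst z *\<^sub>R snd z, snd z)"]
    by (simp add: continuous_intros)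
  then have cont': "continuous_on (U \<times> UNIV) (\<lambda>(t, x). v' (t *\<^sub>R x) x / norm x powr s)"
    unfolding case_prod_beta using off_S v'_vanish \<open>\<delta> > 0\<close>
    by (intro continuous_on_divide_norm_powr continuous_intros) (auto simp: not_le)
  have "convex U" "1 \<in> interior U"
    by (simp_all add: U_def)
  note leibniz = leibniz_rule_lborel[OF this _ cont cont', of "-a" a]
  have support: "v (t *\<^sub>R x) / norm x powr s = 0 \<and> v' (t *\<^sub>R x) x / norm x powr s = 0"
    if "t \<in> U" "x \<notin> cbox (-a) a" for t x
    using annulus[OF that(1), of x] vanish v'_vanish that(2) by (cases "t *\<^sub>R x \<in> S") auto
  have "((\<lambda>t. v (t *\<^sub>R x) / norm x powr s) has_field_derivative v' (t *\<^sub>R x) x / norm x powr s)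
      (at t within U)" for t x
    by (intro DERIV_cdivide has_field_derivative_dilation v)
  with leibniz support show "integrable lborel (\<lambda>x. v' x x / norm x powr s)"
    and "((\<lambda>t. \<integral>x. v (t *\<^sub>R x) / norm x powr s \<partial>lborel) has_field_derivative
      (\<integral>x. v' x x / norm x powr s \<partial>lborel)) (at 1)"
    by simp_all
qed

lemma lborel_integral_radial_derivative_norm_powr:
  fixes v :: "'a::euclidean_space \<Rightarrow> real"
  assumes v: "\<And>y. (v has_derivative v' y) (at y)"
    and v'_cont: "continuous_on UNIV (\<lambda>z. v' (fst z) (snd z))"
    and S: "compact S" "0 \<notin> S" and vanish: "\<And>y. y \<notin> S \<Longrightarrow> v y = 0"
  shows "(\<integral>x. v' x x / norm x powr s \<partial>lborel) = (s - DIM('a)) * (\<integral>x. v x / norm x powr s \<partial>lborel)"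
proof -
  define G where "G = (\<integral>x. v x / norm x powr s \<partial>lborel)"
  have meas: "v \<in> borel_measurable borel"
    using v by (intro borel_measurable_continuous_onI)
      (meson continuous_at_imp_continuous_on has_derivative_continuous)
  have dilation: "t powr (s - DIM('a)) * G = (\<integral>x. v (t *\<^sub>R x) / norm x powr s \<partial>lborel)"
    if "t > 0" for t
    unfolding G_def by (rule lborel_integral_dilation_norm_powr[OF that meas, symmetric])
  have "((\<lambda>t. t powr (s - DIM('a)) * G) has_field_derivative (s - DIM('a)) * G) (at 1)"
    using DERIV_cmult_right[OF has_real_derivative_powr[of 1 "s - DIM('a)"], of G] by simp
  then have "((\<lambda>t. \<integral>x. v (t *\<^sub>R x) / norm x powr s \<partial>lborel) has_field_derivative
      (s - DIM('a)) * G) (at 1)"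
    by (rule has_field_derivative_transform_within_open[of _ _ _ "{0<..}"]) (simp_all add: dilation)
  with has_field_derivative_lborel_integral_dilation(2)[OF assms] show ?thesis
    unfolding G_def by (rule DERIV_unique)
qed

lemma smooth_fun_has_derivative:
  "smooth_fun f \<Longrightarrow> (f has_derivative frechet_derivative f (at x)) (at x)"
  by (cases rule: smooth_fun.cases) (auto simp: frechet_derivative_works)

lemma continuous_on_smooth_fun: "smooth_fun f \<Longrightarrow> continuous_on S f"
  by (meson continuous_at_imp_continuous_on has_derivative_continuous smooth_fun_has_derivative)

lemma continuous_on_smooth_fun_derivative:
  fixes f :: "'a::euclidean_space \<Rightarrow> 'b::real_normed_vector"
  assumes f: "smooth_fun f" and g: "continuous_on S g" and h: "continuous_on S h"
  shows "continuous_on S (\<lambda>t. frechet_derivative f (at (g t)) (h t))"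
proof -
  have "continuous_on UNIV (\<lambda>x. frechet_derivative f (at x) b)" for b
  proof -
    from f have "smooth_fun (\<lambda>x. frechet_derivative f (at x) b)"
      by (cases rule: smooth_fun.cases) auto
    then have "(\<lambda>x. frechet_derivative f (at x) b) differentiable (at x)" for x
      by (cases rule: smooth_fun.cases) auto
    then show ?thesis
      by (simp add: continuous_on_eq_continuous_at differentiable_imp_continuous_within)
  qed
  then have basis: "continuous_on S (\<lambda>t. frechet_derivative f (at (g t)) b)" for b
    by (rule continuous_on_compose2[OF _ g]) simp
  have lin: "linear (frechet_derivative f (at x))" for x
    using smooth_fun_has_derivative[OF f] has_derivative_linear by blast
  have rep: "frechet_derivative f (at (g t)) (h t)
      = (\<Sum>b\<in>Basis. (h t \<bullet> b) *\<^sub>R frechet_derivative f (at (g t)) b)" for t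
  proof -
    have "frechet_derivative f (at (g t)) (h t)
        = frechet_derivative f (at (g t)) (\<Sum>b\<in>Basis. (h t \<bullet> b) *\<^sub>R b)"
      by (simp add: euclidean_representation)
    also have "\<dots> = (\<Sum>b\<in>Basis. (h t \<bullet> b) *\<^sub>R frechet_derivative f (at (g t)) b)"
      by (simp add: linear_sum[OF lin] linear_scale[OF lin] o_def)
    finally show ?thesis .
  qed
  show ?thesis
    unfolding rep by (intro continuous_intros basis h)
qed

lemma Cc_inf_punctured_support:
  fixes u :: "'a::euclidean_space \<Rightarrow> complex"
  assumes "Cc_inf_punctured u"
  obtains S where "compact S" "0 \<notin> S" "\<And>x. x \<notin> S \<Longrightarrow> u x = 0"
    "\<And>x. x \<notin> S \<Longrightarrow> frechet_derivative u (at x) = (\<lambda>h. 0)"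
proof
  let ?S = "closure {x. u x \<noteq> 0}"
  show "compact ?S" "0 \<notin> ?S"
    using assms by (auto simp: Cc_inf_punctured_def)
  show vanish: "u x = 0" if "x \<notin> ?S" for x
    using that closure_subset[of "{x. u x \<noteq> 0}"] by auto
  show "frechet_derivative u (at x) = (\<lambda>h. 0)" if "x \<notin> ?S" for x
    using that
    by (intro frechet_derivative_at[symmetric] has_derivative_locally_zero[of "- ?S"] vanish) auto
qed

lemma integrable_Cc_inf_punctured_norm_powr:
  fixes u :: "'a::euclidean_space \<Rightarrow> complex"
  assumes "1 < p" and u: "Cc_inf_punctured u"
  shows "integrable lborel (\<lambda>x. norm (u x) powr p / norm x powr p)"
    and "integrable lborel (\<lambda>x. norm (frechet_derivative u (at x) (x /\<^sub>R norm x)) powr p)"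
proof -
  obtain S where "compact S" "0 \<notin> S" and vanish: "\<And>x. x \<notin> S \<Longrightarrow> u x = 0"
    and vanish': "\<And>x. x \<notin> S \<Longrightarrow> frechet_derivative u (at x) = (\<lambda>h. 0)"
    using Cc_inf_punctured_support[OF u] by blast
  obtain \<delta> where "\<delta> > 0" and "\<forall>x\<in>S. \<delta> \<le> norm x"
    using separate_point_closed[OF compact_imp_closed[OF \<open>compact S\<close>] \<open>0 \<notin> S\<close>] by (auto simp: dist_norm)
  then have near0: "x \<notin> S" if "norm x < \<delta>" for x
    using that by force
  have smooth: "smooth_fun u"
    using u by (simp add: Cc_inf_punctured_def)
  have "continuous_on UNIV u"
    by (rule continuous_on_smooth_fun[OF smooth])
  then have "continuous_on UNIV (\<lambda>x. norm (u x) powr p)"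
    using \<open>1 < p\<close> by (intro continuous_on_powr' continuous_on_norm continuous_on_const) auto
  then have "continuous_on UNIV (\<lambda>x. norm (u x) powr p / norm x powr p)"
    using near0 vanish \<open>1 < p\<close>
    by (intro continuous_on_divide_norm_powr[OF _ continuous_on_id \<open>\<delta> > 0\<close>]) auto
  then show "integrable lborel (\<lambda>x. norm (u x) powr p / norm x powr p)"
    using \<open>compact S\<close> by (rule integrable_continuous_compact_support) (use vanish \<open>1 < p\<close> in simp)
  have "continuous_on UNIV (\<lambda>x. frechet_derivative u (at x) x)"
    by (rule continuous_on_smooth_fun_derivative[OF smooth continuous_on_id continuous_on_id])
  then have "continuous_on UNIV (\<lambda>x. norm (frechet_derivative u (at x) x) powr p)"
    using \<open>1 < p\<close> by (intro continuous_on_powr' continuous_on_norm continuous_on_const) auto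
  then have "continuous_on UNIV (\<lambda>x. norm (frechet_derivative u (at x) x) powr p / norm x powr p)"
    using near0 vanish' \<open>1 < p\<close>
    by (intro continuous_on_divide_norm_powr[OF _ continuous_on_id \<open>\<delta> > 0\<close>]) auto
  moreover have "norm (frechet_derivative u (at x) x) powr p / norm x powr p
      = norm (frechet_derivative u (at x) (x /\<^sub>R norm x)) powr p" for x
    using has_derivative_linear[OF smooth_fun_has_derivative[OF smooth]]
    by (cases "x = 0") (simp_all add: linear_0 linear_scale powr_mult inverse_powr divide_inverse_commute)
  ultimately show "integrable lborel (\<lambda>x. norm (frechet_derivative u (at x) (x /\<^sub>R norm x)) powr p)"
    using \<open>compact S\<close> by (intro integrable_continuous_compact_support) (use vanish' \<open>1 < p\<close> in auto)
qed

lemma lborel_integral_radial_derivative_Cc_inf_punctured: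
  fixes u :: "'a::euclidean_space \<Rightarrow> complex"
  assumes "1 < p" and u: "Cc_inf_punctured u"
  shows "integrable lborel
      (\<lambda>x. p * (norm_powr_grad p (u x) \<bullet> frechet_derivative u (at x) x) / norm x powr p)"
    and "(\<integral>x. p * (norm_powr_grad p (u x) \<bullet> frechet_derivative u (at x) x) / norm x powr p \<partial>lborel)
      = (p - DIM('a)) * (\<integral>x. norm (u x) powr p / norm x powr p \<partial>lborel)"
proof -
  obtain S where S: "compact S" "0 \<notin> S" and vanish: "\<And>x. x \<notin> S \<Longrightarrow> u x = 0"
    using Cc_inf_punctured_support[OF u] by metis
  then have vanish_v: "norm (u x) powr p = 0" if "x \<notin> S" for x
    using that by simp
  have smooth: "smooth_fun u"
    using u by (simp add: Cc_inf_punctured_def)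
  have v: "((\<lambda>y. norm (u y) powr p) has_derivative
      (\<lambda>w. p * (norm_powr_grad p (u y) \<bullet> frechet_derivative u (at y) w))) (at y)" for y
    using has_derivative_compose[OF smooth_fun_has_derivative[OF smooth, of y]
        has_derivative_norm_powr[OF \<open>1 < p\<close>]] .
  have "continuous_on UNIV (\<lambda>z::'a \<times> 'a. u (fst z))"
    by (rule continuous_on_compose2[OF continuous_on_smooth_fun[OF smooth] continuous_on_fst])
       (auto intro: continuous_on_id)
  then have "continuous_on UNIV (\<lambda>z::'a \<times> 'a. norm_powr_grad p (u (fst z)))"
    by (rule continuous_on_compose2[OF continuous_on_norm_powr_grad[OF \<open>1 < p\<close>]]) auto
  then have v'_cont: "continuous_on UNIV
      (\<lambda>z. p * (norm_powr_grad p (u (fst z)) \<bullet> frechet_derivative u (at (fst z)) (snd z)))"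
    by (intro continuous_on_mult[OF continuous_on_const] continuous_on_inner
        continuous_on_smooth_fun_derivative[OF smooth] continuous_on_fst continuous_on_snd
        continuous_on_id)
  show "integrable lborel
      (\<lambda>x. p * (norm_powr_grad p (u x) \<bullet> frechet_derivative u (at x) x) / norm x powr p)"
    using has_field_derivative_lborel_integral_dilation(1)[OF v v'_cont S vanish_v] .
  show "(\<integral>x. p * (norm_powr_grad p (u x) \<bullet> frechet_derivative u (at x) x) / norm x powr p \<partial>lborel)
      = (p - DIM('a)) * (\<integral>x. norm (u x) powr p / norm x powr p \<partial>lborel)"
    using lborel_integral_radial_derivative_norm_powr[OF v v'_cont S vanish_v] .
qed

lemma lborel_integral_Cp_weighted_radial_derivative:
  fixes u :: "'a::euclidean_space \<Rightarrow> complex"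
  assumes "1 < p" and u: "Cc_inf_punctured u"
  shows "(\<integral>x. Cp p (frechet_derivative u (at x) (x /\<^sub>R norm x))
        (complex_of_real (norm x powr - a)
          * frechet_derivative (\<lambda>y. complex_of_real (norm y powr a) * u y) (at x) (x /\<^sub>R norm x)) \<partial>lborel)
    = (\<integral>x. norm (frechet_derivative u (at x) (x /\<^sub>R norm x)) powr p \<partial>lborel)
      + ((p - 1) * \<bar>a\<bar> powr p + a * \<bar>a\<bar> powr (p - 2) * (p - DIM('a)))
        * (\<integral>x. norm (u x) powr p / norm x powr p \<partial>lborel)"
proof -
  note integrable = integrable_Cc_inf_punctured_norm_powr[OF assms]
  note radial = lborel_integral_radial_derivative_Cc_inf_punctured[OF assms]
  have smooth: "smooth_fun u"
    using u by (simp add: Cc_inf_punctured_def)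
  have "(\<integral>x. Cp p (frechet_derivative u (at x) (x /\<^sub>R norm x))
        (complex_of_real (norm x powr - a)
          * frechet_derivative (\<lambda>y. complex_of_real (norm y powr a) * u y) (at x) (x /\<^sub>R norm x)) \<partial>lborel)
    = (\<integral>x. norm (frechet_derivative u (at x) (x /\<^sub>R norm x)) powr p
        + (p - 1) * \<bar>a\<bar> powr p * (norm (u x) powr p / norm x powr p)
        + a * \<bar>a\<bar> powr (p - 2)
          * (p * (norm_powr_grad p (u x) \<bullet> frechet_derivative u (at x) x) / norm x powr p) \<partial>lborel)"
    by (simp only: Cp_weighted_radial_derivative[OF smooth_fun_has_derivative[OF smooth]])
  also have "\<dots> = (\<integral>x. norm (frechet_derivative u (at x) (x /\<^sub>R norm x)) powr p \<partial>lborel)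
      + (p - 1) * \<bar>a\<bar> powr p * (\<integral>x. norm (u x) powr p / norm x powr p \<partial>lborel)
      + a * \<bar>a\<bar> powr (p - 2)
        * (\<integral>x. p * (norm_powr_grad p (u x) \<bullet> frechet_derivative u (at x) x) / norm x powr p \<partial>lborel)"
    using integrable radial(1)
    by (simp only: Bochner_Integration.integral_add integral_mult_right_zero
        Bochner_Integration.integrable_add integrable_mult_right)
  also have "\<dots> = (\<integral>x. norm (frechet_derivative u (at x) (x /\<^sub>R norm x)) powr p \<partial>lborel)
      + ((p - 1) * \<bar>a\<bar> powr p + a * \<bar>a\<bar> powr (p - 2) * (p - DIM('a)))
        * (\<integral>x. norm (u x) powr p / norm x powr p \<partial>lborel)"
    unfolding radial(2) by (simp add: algebra_simps)
  finally show ?thesis .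
qed

theorem corollary4p1:
  fixes p :: real and u :: "real ^ 'n \<Rightarrow> complex"
  assumes "1 < p" and "Cc_inf_punctured u"
  shows "(\<integral>x. norm (frechet_derivative u (at x) (x /\<^sub>R norm x)) powr p \<partial>lborel)
       = \<bar>(real CARD('n) - p) / p\<bar> powr p * (\<integral>x. norm (u x) powr p / norm x powr p \<partial>lborel)
         + (\<integral>x. Cp p (frechet_derivative u (at x) (x /\<^sub>R norm x))
              (complex_of_real (norm x powr (- ((real CARD('n) - p) / p)))
                * frechet_derivative (\<lambda>y. complex_of_real (norm y powr ((real CARD('n) - p) / p)) * u y)
                    (at x) (x /\<^sub>R norm x)) \<partial>lborel)"
proof -
  define a where "a = (real CARD('n) - p) / p"
  have "(p - 1) * \<bar>a\<bar> powr p + a * \<bar>a\<bar> powr (p - 2) * (p - CARD('n)) = - (\<bar>a\<bar> powr p)"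
    using powr_mult_square[of "\<bar>a\<bar>" p] \<open>1 < p\<close> by (simp add: a_def power2_eq_square field_simps)
  then show ?thesis
    using lborel_integral_Cp_weighted_radial_derivative[OF assms, of a] by (simp add: a_def)
qed

end
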